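(* In the $K$-tier network model described in the context with $W=0$ and fixed target $\beta>0$, regard the interference-limited outage probability $\mathcal O_k^{int}=\mathbb P\{P_k\|\mathbf h\|^2X_k^{-\alpha_k}/I_o<\beta\}$ of a typical user associated with tier $k$ as a function of the access threshold $\epsilon$, all other parameters fixed. Then $\lim_{\epsilon\to\infty}\mathcal O_k^{int}=0$ for every $k\in\mathcal K$.
   Context: Network model: $\mathcal K=\{1,\dots,K\}$. In $\mathbb R^2$, tier-$k$ BSs form a homogeneous PPP of intensity $\lambda_k>0$ and users a homogeneous PPP of intensity $\lambda_u>0$, all independent. Tier-$k$ BSs have transmit power $P_k>0$, $M_k\in\mathbb N$ antennas, bias $B_k>0$, path-loss exponent $\alpha_k>2$. $\Omega_k=P_kM_kB_k$, $\delta_k=2/\alpha_k$, $\Omega_{j,k}=\Omega_j/\Omega_k$, $\delta_{j,k}=\delta_j/\delta_k$. Access threshold $\epsilon>0$, $R_k=(\Omega_k/\epsilon)^{1/\alpha_k}$. Association: with $D_k$ the distance from a typical user to its nearest tier-$k$ BS, $\hat\rho_k=\Omega_kD_k^{-\alpha_k}$ if $D_k\le R_k$, else $0$; the user is associated with tier $k$ iff $\hat\rho_k>\hat\rho_j$ for all $j\ne k$, with probability $\mathcal T_k=\pi\lambda_k\int_0^{R_k^2}\exp(-\pi\sum_j\lambda_j\Omega_{j,k}^{\delta_j}r^{\delta_{j,k}})dr$. Activation probability of tier $j$: $\mathcal A_j=1-\exp\big(-\pi\lambda_u\int_0^{R_j^2}\exp(-\pi\sum_l\lambda_l\Omega_{l,j}^{\delta_l}r^{\delta_{l,j}})dr\big)$;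 active tier-$j$ BSs are modeled as a homogeneous PPP of intensity $\mathcal A_j\lambda_j$. SINR model: conditional on association with tier $k$, the serving distance $X_k$ has density $\frac{2\pi\lambda_k}{\mathcal T_k}x\exp(-\pi\sum_j\lambda_j\Omega_{j,k}^{\delta_j}x^{2\delta_{j,k}})$ on $(0,R_k]$; given $X_k$, interferers of tier $j$ are the points of independent homogeneous PPPs of intensity $\mathcal A_j\lambda_j$ outside the disk around the user of radius $\Omega_{j,k}^{1/\alpha_j}X_k^{\alpha_k/\alpha_j}$; the signal gain $\|\mathbf h\|^2\sim\mathrm{Gamma}(M_k,1)$, an interferer of tier $j$ at distance $r$ contributes $P_jVr^{-\alpha_j}$ with $V\sim\mathrm{Exp}(1)$, all fading independent of each other and of the point processes; $I_o$ is the total interference. Note $R_k$, $\mathcal T_k$, $\mathcal A_j$ all depend on $\epsilon$. *)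

theory Defs
  imports "HOL-Probability.Probability"
begin

text \<open>Tiers are indexed by the set {1..K}. Om j is the biased received-power weight
  Omega_j = P_j M_j B_j.\<close>

definition Omg :: "(nat \<Rightarrow> real) \<Rightarrow> (nat \<Rightarrow> nat) \<Rightarrow> (nat \<Rightarrow> real) \<Rightarrow> nat \<Rightarrow> real" where
  "Omg P Mn Bs j = P j * real (Mn j) * Bs j"

definition accR :: "(nat \<Rightarrow> real) \<Rightarrow> (nat \<Rightarrow> real) \<Rightarrow> real \<Rightarrow> nat \<Rightarrow> real" where
  "accR Om al eps j = (Om j / eps) powr (1 / al j)"

definition gfun :: "nat \<Rightarrow> (nat \<Rightarrow> real) \<Rightarrow> (nat \<Rightarrow> real) \<Rightarrow> (nat \<Rightarrow> real) \<Rightarrow> nat \<Rightarrow> real \<Rightarrow> real" where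
  "gfun K lam Om al k r =
     exp (- (pi * (\<Sum>l\<in>{1..K}. lam l * (Om l / Om k) powr (2 / al l) * r powr ((2 / al l) / (2 / al k)))))"

definition assocT :: "nat \<Rightarrow> (nat \<Rightarrow> real) \<Rightarrow> (nat \<Rightarrow> real) \<Rightarrow> (nat \<Rightarrow> real) \<Rightarrow> real \<Rightarrow> nat \<Rightarrow> real" where
  "assocT K lam Om al eps k = pi * lam k * integral {0..(accR Om al eps k)\<^sup>2} (gfun K lam Om al k)"

definition actA :: "nat \<Rightarrow> (nat \<Rightarrow> real) \<Rightarrow> real \<Rightarrow> (nat \<Rightarrow> real) \<Rightarrow> (nat \<Rightarrow> real) \<Rightarrow> real \<Rightarrow> nat \<Rightarrow> real" where
  "actA K lam lu Om al eps j =
     1 - exp (- (pi * lu * integral {0..(accR Om al eps j)\<^sup>2} (gfun K lam Om al j)))"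

text \<open>Density of the serving distance X_k conditional on association with tier k.\<close>
definition servDens :: "nat \<Rightarrow> (nat \<Rightarrow> real) \<Rightarrow> (nat \<Rightarrow> real) \<Rightarrow> (nat \<Rightarrow> real) \<Rightarrow> real \<Rightarrow> nat \<Rightarrow> real \<Rightarrow> real" where
  "servDens K lam Om al eps k x =
     (if 0 < x \<and> x \<le> accR Om al eps k
      then 2 * pi * lam k / assocT K lam Om al eps k * x * gfun K lam Om al k (x\<^sup>2)
      else 0)"

text \<open>Radius of the interference-free disk for tier j when the serving distance is x.\<close>
definition drad :: "(nat \<Rightarrow> real) \<Rightarrow> (nat \<Rightarrow> real) \<Rightarrow> nat \<Rightarrow> nat \<Rightarrow> real \<Rightarrow> real" where
  "drad Om al k j x = (Om j / Om k) powr (1 / al j) * x powr (al k / al j)"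

text \<open>Homogeneous PPP of intensity mu on R^2 (points indexed by a measurable enumeration p n):
  counts in bounded Borel sets are Poisson with mean mu * area, and counts in disjoint
  bounded Borel sets are independent.\<close>
definition hppp :: "'w measure \<Rightarrow> real \<Rightarrow> (nat \<Rightarrow> 'w \<Rightarrow> real \<times> real) \<Rightarrow> bool" where
  "hppp M mu p \<longleftrightarrow>
     (\<forall>n. p n \<in> M \<rightarrow>\<^sub>M borel) \<and>
     (\<forall>\<omega>\<in>space M. inj (\<lambda>n. p n \<omega>)) \<and>
     (\<forall>B. B \<in> sets borel \<and> bounded B \<longrightarrow>
        (\<forall>\<omega>\<in>space M. finite {n. p n \<omega> \<in> B}) \<and>
        (\<forall>m::nat. measure M {\<omega>\<in>space M. card {n. p n \<omega> \<in> B} = m}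
            = exp (- (mu * measure lborel B)) * (mu * measure lborel B) ^ m / fact m)) \<and>
     (\<forall>(F::nat set) (Bs :: nat \<Rightarrow> (real \<times> real) set).
        finite F \<and> (\<forall>i\<in>F. Bs i \<in> sets borel \<and> bounded (Bs i)) \<and> disjoint_family_on Bs F \<longrightarrow>
        prob_space.indep_vars M (\<lambda>_. count_space UNIV) (\<lambda>i \<omega>. card {n. p n \<omega> \<in> Bs i}) F)"

text \<open>Components of the model that are mutually independent: serving distance,
  signal gain, the point process of each tier, and each interferer fading mark.\<close>
datatype comp = cX | cG | cP nat | cV nat nat

definition gen_sets :: "'w measure \<Rightarrow> ('w \<Rightarrow> 'b) \<Rightarrow> 'b measure \<Rightarrow> 'w set set" where
  "gen_sets M Y N = {Y -` A \<inter> space M | A. A \<in> sets N}"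

definition comp_sets :: "'w measure \<Rightarrow> ('w \<Rightarrow> real) \<Rightarrow> ('w \<Rightarrow> real)
    \<Rightarrow> (nat \<Rightarrow> nat \<Rightarrow> 'w \<Rightarrow> real \<times> real) \<Rightarrow> (nat \<Rightarrow> nat \<Rightarrow> 'w \<Rightarrow> real) \<Rightarrow> comp \<Rightarrow> 'w set set" where
  "comp_sets M X G p V c = (case c of
      cX \<Rightarrow> gen_sets M X borel
    | cG \<Rightarrow> gen_sets M G borel
    | cP j \<Rightarrow> gen_sets M (\<lambda>\<omega> n. p j n \<omega>) (PiM UNIV (\<lambda>_. borel))
    | cV j n \<Rightarrow> gen_sets M (V j n) borel)"

definition comp_idx :: "nat \<Rightarrow> comp set" where
  "comp_idx K = {cX, cG} \<union> cP ` {1..K} \<union> (\<lambda>(j, n). cV j n) ` ({1..K} \<times> UNIV)"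

text \<open>Total interference I_o (ennreal-valued, may a priori be infinite): tier-j interferers
  are the points of the tier-j PPP outside the disk of radius drad, each contributing
  P_j V r^(-alpha_j).\<close>
definition interf :: "nat \<Rightarrow> (nat \<Rightarrow> real) \<Rightarrow> (nat \<Rightarrow> real) \<Rightarrow> (nat \<Rightarrow> real) \<Rightarrow> nat
    \<Rightarrow> (nat \<Rightarrow> nat \<Rightarrow> 'w \<Rightarrow> real \<times> real) \<Rightarrow> (nat \<Rightarrow> nat \<Rightarrow> 'w \<Rightarrow> real) \<Rightarrow> ('w \<Rightarrow> real) \<Rightarrow> 'w \<Rightarrow> ennreal" where
  "interf K P Om al k p V X \<omega> =
     (\<Sum>j\<in>{1..K}. \<Sum>n. if drad Om al k j (X \<omega>) < norm (p j n \<omega>)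
        then ennreal (P j * V j n \<omega> * norm (p j n \<omega>) powr (- al j)) else 0)"

definition sir_model :: "nat \<Rightarrow> (nat \<Rightarrow> real) \<Rightarrow> real \<Rightarrow> (nat \<Rightarrow> real) \<Rightarrow> (nat \<Rightarrow> nat) \<Rightarrow> (nat \<Rightarrow> real)
    \<Rightarrow> (nat \<Rightarrow> real) \<Rightarrow> real \<Rightarrow> nat \<Rightarrow> 'w measure \<Rightarrow> ('w \<Rightarrow> real) \<Rightarrow> ('w \<Rightarrow> real)
    \<Rightarrow> (nat \<Rightarrow> nat \<Rightarrow> 'w \<Rightarrow> real \<times> real) \<Rightarrow> (nat \<Rightarrow> nat \<Rightarrow> 'w \<Rightarrow> real) \<Rightarrow> bool" where
  "sir_model K lam lu P Mn Bs al eps k M X G p V \<longleftrightarrow>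
     (let Om = Omg P Mn Bs in
       prob_space M \<and>
       distributed M lborel X (\<lambda>x. ennreal (servDens K lam Om al eps k x)) \<and>
       distributed M lborel G (\<lambda>x. ennreal (erlang_density (Mn k - 1) 1 x)) \<and>
       (\<forall>j\<in>{1..K}. hppp M (actA K lam lu Om al eps j * lam j) (p j)) \<and>
       (\<forall>j\<in>{1..K}. \<forall>n. distributed M lborel (V j n) (\<lambda>x. ennreal (exponential_density 1 x))) \<and>
       prob_space.indep_sets M (comp_sets M X G p V) (comp_idx K))"

end

theory Submission
  imports Defs "HOL-Real_Asymp.Real_Asymp"
begin

text \<open>Since the serving distance never exceeds the access radius R_k = (Omega_k/eps)^(1/alpha_k), the
  serving link has path gain at least eps/Omega_k, so the signal grows like eps unless the fading gain
  is small. Meanwhile R_j \<rightarrow> 0 forces every activation probability A_j \<rightarrow> 0. Outage therefore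
  requires a fading gain G \<le> delta (probability at most delta), an active tier-j BS in the unit
  square (probability at most 4 A_j lambda_j), or a shot noise of the BSs outside the unit square of
  at least P_k delta eps/Omega_k. The mean of that shot noise is bounded uniformly in eps by summing
  over dyadic square shells, whose areas grow like 4^m while the path loss decays like 2^(-alpha m)
  with alpha > 2, and Markov's inequality bounds the last probability. Taking delta = eps^(-1/2)
  makes all three bounds vanish.\<close>

lemma poisson_mean_sums:
  fixes x :: real
  shows "(\<lambda>m. real m * (exp (- x) * x ^ m / fact m)) sums x"
proof -
  have "(\<lambda>m. x ^ m / fact m) sums exp x"
    using exp_converges[of x] by (simp add: scaleR_conv_of_real divide_inverse mult.commute)
  then have "(\<lambda>m. exp (- x) * x * (x ^ m / fact m)) sums (exp (- x) * x * exp x)"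
    by (rule sums_mult)
  then have "(\<lambda>m. real (Suc m) * (exp (- x) * x ^ Suc m / fact (Suc m))) sums x"
    by (simp add: exp_minus field_simps fact_Suc del: of_nat_Suc)
  then show ?thesis
    using sums_Suc_iff[of "\<lambda>m. real m * (exp (- x) * x ^ m / fact m)" x] by simp
qed

lemma ennreal_le_suminf: "(f n :: ennreal) \<le> (\<Sum>n. f n)"
  by (rule order_trans[OF _ sum_le_suminf[of f "{n}"]]) auto

lemma ennreal_suminf_swap: "(\<Sum>n. \<Sum>m. f n m :: ennreal) = (\<Sum>m. \<Sum>n. f n m)"
  using nn_integral_suminf[of "\<lambda>n m. f n m" "count_space UNIV"]
  by (simp add: nn_integral_count_space_nat)

lemma ennreal_suminf_indicator_finite:
  assumes "finite S"
  shows "(\<Sum>n. indicator S n :: ennreal) = of_nat (card S)"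
  using assms by (subst suminf_finite[of S]) auto

lemma (in prob_space) prob_ge_le_nn_integral:
  assumes [measurable]: "u \<in> borel_measurable M"
    and u: "(\<integral>\<^sup>+\<omega>. u \<omega> \<partial>M) \<le> ennreal c" and t: "0 < t" and c: "0 \<le> c"
  shows "prob {\<omega>\<in>space M. ennreal t \<le> u \<omega>} \<le> c / t"
proof -
  have "{\<omega>\<in>space M. ennreal t \<le> u \<omega>} \<subseteq> {\<omega>\<in>space M. 1 \<le> ennreal (1 / t) * u \<omega>}"
  proof safe
    fix \<omega> assume "ennreal t \<le> u \<omega>"
    then have "ennreal (1 / t) * ennreal t \<le> ennreal (1 / t) * u \<omega>" by (rule mult_left_mono) simp
    then show "1 \<le> ennreal (1 / t) * u \<omega>" using t by (simp flip: ennreal_mult)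
  qed
  then have "emeasure M {\<omega>\<in>space M. ennreal t \<le> u \<omega>}
      \<le> emeasure M {\<omega>\<in>space M. 1 \<le> ennreal (1 / t) * u \<omega>}"
    by (rule emeasure_mono) measurable
  also have "\<dots> \<le> ennreal (1 / t) * (\<integral>\<^sup>+\<omega>. u \<omega> \<partial>M)"
    using nn_integral_Markov_inequality[of u "space M" M "ennreal (1 / t)"]
    by (simp cong: nn_integral_cong)
  also have "\<dots> \<le> ennreal (c / t)"
    using mult_left_mono[OF u, of "ennreal (1 / t)"] t c by (simp flip: ennreal_mult)
  finally show ?thesis using t c by (simp add: emeasure_eq_measure)
qed

lemma (in prob_space) prob_compl_Int_eq_mult:
  assumes E: "E \<in> events" and B: "B \<in> events" and indep: "prob (E \<inter> B) = prob E * prob B"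
  shows "prob ((space M - E) \<inter> B) = prob (space M - E) * prob B"
proof -
  have "prob ((space M - E) \<inter> B) = prob (B - E \<inter> B)"
    using sets.sets_into_space[OF B] by (metis Diff_Int2 Diff_Int_distrib2 Int_absorb2 inf_commute)
  also have "\<dots> = prob B - prob E * prob B"
    using E B indep by (subst finite_measure_Diff) auto
  also have "\<dots> = prob (space M - E) * prob B"
    using E by (simp add: prob_compl algebra_simps)
  finally show ?thesis .
qed

lemma (in prob_space) nn_integral_indicator_mult_indep:
  assumes E: "E \<in> events" and [measurable]: "V \<in> borel_measurable M"
    and indep: "\<And>B. B \<in> sets borel \<Longrightarrow>
      prob (E \<inter> (V -` B \<inter> space M)) = prob E * prob (V -` B \<inter> space M)"
  shows "(\<integral>\<^sup>+\<omega>. indicator E \<omega> * ennreal (V \<omega>) \<partial>M) = emeasure M E * (\<integral>\<^sup>+\<omega>. ennreal (V \<omega>) \<partial>M)"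
proof -
  define Y where "Y b = (if b then (\<lambda>\<omega>. indicator E \<omega> :: ennreal) else (\<lambda>\<omega>. ennreal (V \<omega>)))" for b
  have rv: "random_variable borel (Y b)" for b
    unfolding Y_def using E by (cases b) auto
  have gen_True: "Y True -` A \<inter> space M \<in> {{}, E, space M - E, space M}" for A
  proof -
    have "Y True -` A \<inter> space M
        = (if 1 \<in> A then E else {}) \<union> (if 0 \<in> A then space M - E else {})"
      using sets.sets_into_space[OF E] unfolding Y_def by (auto simp: indicator_def of_bool_def split: if_splits)
    then show ?thesis using sets.sets_into_space[OF E] by (auto split: if_splits)
  qed
  have indep_gen: "prob (a \<inter> (V -` B \<inter> space M)) = prob a * prob (V -` B \<inter> space M)"
    if "a \<in> {{}, E, space M - E, space M}" and B: "B \<in> sets borel" for a B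
  proof -
    have "V -` B \<inter> space M \<in> events" using B by measurable
    then show ?thesis
      using that indep[OF B] prob_compl_Int_eq_mult[OF E _ indep[OF B]]
      by (auto simp: Int_absorb1 prob_space)
  qed
  have "indep_set {Y True -` A \<inter> space M | A. A \<in> sets borel} {Y False -` A \<inter> space M | A. A \<in> sets borel}"
    unfolding indep_sets2_eq
  proof (intro conjI ballI)
    show "{Y True -` A \<inter> space M | A. A \<in> sets borel} \<subseteq> events"
      and "{Y False -` A \<inter> space M | A. A \<in> sets borel} \<subseteq> events"
      using rv by auto
    fix a b assume a: "a \<in> {Y True -` A \<inter> space M | A. A \<in> sets borel}"
      and b: "b \<in> {Y False -` A \<inter> space M | A. A \<in> sets borel}"
    from b obtain B where B: "B \<in> sets (borel :: ennreal measure)" "b = Y False -` B \<inter> space M" by auto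
    have "ennreal -` B \<in> sets borel"
      using measurable_sets[OF _ B(1), of ennreal borel] by simp
    moreover have "b = V -` (ennreal -` B) \<inter> space M" using B unfolding Y_def by auto
    moreover from a gen_True have "a \<in> {{}, E, space M - E, space M}" by auto
    ultimately show "prob (a \<inter> b) = prob a * prob b" using indep_gen by auto
  qed
  moreover have "(\<lambda>b. {Y b -` A \<inter> space M | A. A \<in> sets borel}) =
      case_bool {Y True -` A \<inter> space M | A. A \<in> sets borel} {Y False -` A \<inter> space M | A. A \<in> sets borel}"
    by (rule ext) (simp split: bool.split)
  ultimately have "indep_vars (\<lambda>_. borel) Y UNIV"
    unfolding indep_vars_def2 indep_set_def using rv by simp
  from indep_vars_nn_integral[OF _ this]
  have "(\<integral>\<^sup>+\<omega>. (\<Prod>b\<in>UNIV. Y b \<omega>) \<partial>M) = (\<Prod>b\<in>UNIV. \<integral>\<^sup>+\<omega>. Y b \<omega> \<partial>M)" by simp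
  then show ?thesis using E by (simp add: UNIV_bool Y_def mult.commute)
qed

lemma (in prob_space) indep_sets_prob_Int:
  assumes "indep_sets F I" "i \<in> I" "j \<in> I" "i \<noteq> j" "a \<in> F i" "b \<in> F j"
  shows "prob (a \<inter> b) = prob a * prob b"
proof -
  have "prob (\<Inter>l\<in>{i, j}. (\<lambda>l. if l = i then a else b) l)
      = (\<Prod>l\<in>{i, j}. prob ((\<lambda>l. if l = i then a else b) l))"
    by (rule indep_setsD[OF assms(1)]) (use assms in auto)
  then show ?thesis using assms(4) by (auto simp: Int_commute)
qed

lemma nn_integral_exponential_1_mean:
  assumes "distributed M lborel V (\<lambda>x. ennreal (exponential_density 1 x))"
  shows "(\<integral>\<^sup>+\<omega>. ennreal (V \<omega>) \<partial>M) = 1"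
proof -
  have "(\<integral>\<^sup>+\<omega>. ennreal (V \<omega>) \<partial>M) = (\<integral>\<^sup>+x. ennreal (exponential_density 1 x) * ennreal x \<partial>lborel)"
    by (rule distributed_nn_integral[OF assms, symmetric]) measurable
  also have "\<dots> = (\<integral>\<^sup>+x. ennreal (erlang_density 0 1 x * x ^ 1) \<partial>lborel)"
    by (intro nn_integral_cong) (simp add: ennreal_mult' erlang_density_def)
  also have "\<dots> = 1" by (subst nn_integral_erlang_ith_moment) auto
  finally show ?thesis .
qed

lemma (in prob_space) erlang_1_prob_le:
  assumes "distributed M lborel G (\<lambda>x. ennreal (erlang_density k 1 x))" and d: "0 \<le> d"
  shows "prob {\<omega>\<in>space M. G \<omega> \<le> d} \<le> d"
proof -
  have "prob {\<omega>\<in>space M. G \<omega> \<le> d} = 1 - (\<Sum>n\<le>k. d ^ n * exp (- d) / fact n)"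
    using erlang_distributed_le[OF assms(1) _ d] d by (simp add: erlang_CDF_def)
  also have "\<dots> \<le> 1 - exp (- d)"
    using sum_mono2[of "{..k}" "{0}" "\<lambda>n. d ^ n * exp (- d) / fact n"] d by simp
  also have "\<dots> \<le> d" using exp_ge_add_one_self[of "- d"] by simp
  finally show ?thesis .
qed

section \<open>Poisson point processes\<close>

lemma unit_square_measure: "measure lborel (cbox (-1, -1) (1, 1) :: (real \<times> real) set) = 4"
  by (simp add: measure_lborel_cbox_eq Basis_prod_def inner_prod_def)

lemma hppp_measurable[measurable_dest]:
  "hppp M mu p \<Longrightarrow> p n \<in> M \<rightarrow>\<^sub>M borel"
  unfolding hppp_def by auto

lemma (in prob_space) hppp_nn_integral_count:
  assumes H: "hppp M mu p" and B: "B \<in> sets borel" "bounded B"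
  shows "(\<integral>\<^sup>+\<omega>. (\<Sum>n. indicator B (p n \<omega>) :: ennreal) \<partial>M) = ennreal (mu * measure lborel B)"
    and "0 \<le> mu * measure lborel B"
proof -
  define x where "x = mu * measure lborel B"
  define c where "c \<omega> = card {n. p n \<omega> \<in> B}" for \<omega>
  have fin: "\<And>\<omega>. \<omega> \<in> space M \<Longrightarrow> finite {n. p n \<omega> \<in> B}" using H B unfolding hppp_def by auto
  have pois: "\<And>m. prob {\<omega>\<in>space M. c \<omega> = m} = exp (- x) * x ^ m / fact m"
    using H B unfolding hppp_def x_def c_def by auto
  have "0 \<le> exp (- x) * x ^ 1 / fact 1" using pois[of 1] by (metis measure_nonneg)
  then show x0: "0 \<le> mu * measure lborel B" unfolding x_def by (simp add: zero_le_mult_iff)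
  define f where "f \<omega> = (\<Sum>n. indicator B (p n \<omega>) :: ennreal)" for \<omega>
  have [measurable]: "f \<in> borel_measurable M" unfolding f_def using H B(1) by measurable
  have fc: "f \<omega> = of_nat (c \<omega>)" if "\<omega> \<in> space M" for \<omega>
  proof -
    have "f \<omega> = (\<Sum>n. indicator {n. p n \<omega> \<in> B} n)" unfolding f_def by (simp add: indicator_def)
    then show ?thesis using fin[OF that] ennreal_suminf_indicator_finite c_def by simp
  qed
  have "{\<omega>\<in>space M. c \<omega> = m} = {\<omega>\<in>space M. f \<omega> = of_nat m}" for m
    using fc by auto
  then have [measurable]: "{\<omega>\<in>space M. c \<omega> = m} \<in> events" for m by simp
  have "(\<integral>\<^sup>+\<omega>. f \<omega> \<partial>M) = (\<integral>\<^sup>+\<omega>. (\<Sum>m. of_nat m * indicator {\<omega>\<in>space M. c \<omega> = m} \<omega>) \<partial>M)"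
  proof (rule nn_integral_cong)
    fix \<omega> assume w: "\<omega> \<in> space M"
    have "(\<Sum>m. of_nat m * indicator {\<omega>\<in>space M. c \<omega> = m} \<omega> :: ennreal) = of_nat (c \<omega>)"
      using w by (subst suminf_finite[of "{c \<omega>}"]) auto
    then show "f \<omega> = (\<Sum>m. of_nat m * indicator {\<omega>\<in>space M. c \<omega> = m} \<omega>)" using fc[OF w] by simp
  qed
  also have "\<dots> = (\<Sum>m. \<integral>\<^sup>+\<omega>. of_nat m * indicator {\<omega>\<in>space M. c \<omega> = m} \<omega> \<partial>M)"
    by (rule nn_integral_suminf) measurable
  also have "\<dots> = (\<Sum>m. ennreal (real m * (exp (- x) * x ^ m / fact m)))"
    using x0 by (intro suminf_cong)
      (simp add: nn_integral_cmult emeasure_eq_measure pois ennreal_of_nat_eq_real_of_nat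
        x_def flip: ennreal_mult)
  also have "\<dots> = ennreal x"
    using x0 by (intro suminf_ennreal_eq poisson_mean_sums) (auto simp: x_def)
  finally show "(\<integral>\<^sup>+\<omega>. (\<Sum>n. indicator B (p n \<omega>) :: ennreal) \<partial>M) = ennreal (mu * measure lborel B)"
    unfolding f_def x_def .
qed

lemma (in prob_space) hppp_intensity_nonneg:
  assumes "hppp M mu p" shows "0 \<le> mu"
  using hppp_nn_integral_count(2)[OF assms, of "cbox (-1, -1) (1, 1)"]
  by (simp add: unit_square_measure)

lemma (in prob_space) hppp_prob_hits_le:
  assumes H: "hppp M mu p" and B: "B \<in> sets borel" "bounded B"
  shows "prob {\<omega>\<in>space M. \<exists>n. p n \<omega> \<in> B} \<le> mu * measure lborel B"
proof -
  have [measurable]: "{\<omega>\<in>space M. \<exists>n. p n \<omega> \<in> B} \<in> events" using H B(1) by measurable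
  have "emeasure M {\<omega>\<in>space M. \<exists>n. p n \<omega> \<in> B}
      = (\<integral>\<^sup>+\<omega>. indicator {\<omega>\<in>space M. \<exists>n. p n \<omega> \<in> B} \<omega> \<partial>M)"
    by (simp add: nn_integral_indicator)
  also have "\<dots> \<le> (\<integral>\<^sup>+\<omega>. (\<Sum>n. indicator B (p n \<omega>) :: ennreal) \<partial>M)"
  proof (rule nn_integral_mono)
    fix \<omega>
    show "indicator {\<omega>\<in>space M. \<exists>n. p n \<omega> \<in> B} \<omega> \<le> (\<Sum>n. indicator B (p n \<omega>) :: ennreal)"
    proof (cases "\<exists>n. p n \<omega> \<in> B")
      case True
      then obtain n where "p n \<omega> \<in> B" by auto
      then have "indicator {\<omega>\<in>space M. \<exists>n. p n \<omega> \<in> B} \<omega> \<le> (indicator B (p n \<omega>) :: ennreal)"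
        by (simp add: indicator_def)
      also have "\<dots> \<le> (\<Sum>n. indicator B (p n \<omega>))" by (rule ennreal_le_suminf)
      finally show ?thesis .
    qed (simp add: indicator_def)
  qed
  also have "\<dots> = ennreal (mu * measure lborel B)" by (rule hppp_nn_integral_count(1)[OF H B])
  finally show ?thesis using hppp_nn_integral_count(2)[OF H B] by (simp add: emeasure_eq_measure)
qed

lemma (in prob_space) hppp_marked_nn_integral:
  assumes H: "hppp M mu p" and B: "B \<in> sets borel" "bounded B"
    and V: "\<And>n. distributed M lborel (V n) (\<lambda>x. ennreal (exponential_density 1 x))"
    and indep: "\<And>n C. C \<in> sets borel \<Longrightarrow>
      prob ({\<omega>\<in>space M. p n \<omega> \<in> B} \<inter> (V n -` C \<inter> space M))
        = prob {\<omega>\<in>space M. p n \<omega> \<in> B} * prob (V n -` C \<inter> space M)"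
  shows "(\<Sum>n. \<integral>\<^sup>+\<omega>. indicator B (p n \<omega>) * ennreal (V n \<omega>) \<partial>M) = ennreal (mu * measure lborel B)"
proof -
  have [measurable]: "V n \<in> borel_measurable M" for n
    using distributed_measurable[OF V[of n]] by simp
  have [measurable]: "{\<omega>\<in>space M. p n \<omega> \<in> B} \<in> events" for n using H B(1) by measurable
  have "(\<integral>\<^sup>+\<omega>. indicator B (p n \<omega>) * ennreal (V n \<omega>) \<partial>M)
      = (\<integral>\<^sup>+\<omega>. indicator {\<omega>\<in>space M. p n \<omega> \<in> B} \<omega> * ennreal (V n \<omega>) \<partial>M)" for n
    by (intro nn_integral_cong) (simp split: split_indicator)
  also have "\<dots> n = emeasure M {\<omega>\<in>space M. p n \<omega> \<in> B}" for n
    using nn_integral_indicator_mult_indep[OF _ _ indep] nn_integral_exponential_1_mean[OF V]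
    by simp
  also have "\<dots> n = (\<integral>\<^sup>+\<omega>. indicator B (p n \<omega>) \<partial>M)" for n
    by (auto intro!: nn_integral_indicator[symmetric, THEN trans] nn_integral_cong split: split_indicator)
  finally have "(\<Sum>n. \<integral>\<^sup>+\<omega>. indicator B (p n \<omega>) * ennreal (V n \<omega>) \<partial>M)
      = (\<integral>\<^sup>+\<omega>. (\<Sum>n. indicator B (p n \<omega>)) \<partial>M)"
    using H B(1) by (simp add: nn_integral_suminf)
  also have "\<dots> = ennreal (mu * measure lborel B)" by (rule hppp_nn_integral_count(1)[OF H B])
  finally show ?thesis .
qed

section \<open>Shot noise outside the unit square\<close>

definition max_norm :: "real \<times> real \<Rightarrow> real" where
  "max_norm x = max \<bar>fst x\<bar> \<bar>snd x\<bar>"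

definition dyadic_shell :: "nat \<Rightarrow> (real \<times> real) set" where
  "dyadic_shell m = {x. 2 ^ m \<le> max_norm x \<and> max_norm x < 2 ^ Suc m}"

lemma borel_measurable_max_norm[measurable]: "max_norm \<in> borel_measurable borel"
  unfolding max_norm_def by (intro borel_measurable_continuous_onI continuous_intros)

lemma max_norm_le_norm: "max_norm x \<le> norm x"
proof -
  obtain a b where x: "x = (a, b)" by (cases x)
  have "\<bar>a\<bar> \<le> sqrt (a\<^sup>2 + b\<^sup>2)" "\<bar>b\<bar> \<le> sqrt (a\<^sup>2 + b\<^sup>2)"
    by (simp_all add: real_le_rsqrt)
  then show ?thesis by (simp add: x max_norm_def norm_Pair)
qed

lemma one_less_max_norm_iff: "1 < max_norm x \<longleftrightarrow> x \<notin> cbox (-1, -1) (1, 1)"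
  by (cases x) (auto simp: max_norm_def cbox_Pair_eq abs_le_iff)

lemma dyadic_shell_sets[measurable]: "dyadic_shell m \<in> sets borel"
proof -
  have "dyadic_shell m = {x \<in> space borel. 2 ^ m \<le> max_norm x \<and> max_norm x < 2 ^ Suc m}"
    unfolding dyadic_shell_def by auto
  also have "\<dots> \<in> sets borel" by measurable
  finally show ?thesis .
qed

lemma dyadic_shell_subset_cbox: "dyadic_shell m \<subseteq> cbox (- (2 ^ Suc m), - (2 ^ Suc m)) (2 ^ Suc m, 2 ^ Suc m)"
  by (auto simp: dyadic_shell_def max_norm_def cbox_def Basis_prod_def inner_prod_def abs_less_iff)

lemma bounded_dyadic_shell: "bounded (dyadic_shell m)"
  using dyadic_shell_subset_cbox bounded_cbox bounded_subset by blast

lemma measure_dyadic_shell_le: "measure lborel (dyadic_shell m) \<le> 16 * 4 ^ m"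
proof -
  let ?c = "2 ^ Suc m :: real"
  have "measure lborel (dyadic_shell m) \<le> measure lborel (cbox (- ?c, - ?c) (?c, ?c))"
    by (rule measure_mono_fmeasurable[OF dyadic_shell_subset_cbox])
      (auto intro: fmeasurableI simp: emeasure_lborel_cbox_finite)
  also have "\<dots> = (2 * ?c)\<^sup>2"
    by (simp add: measure_lborel_cbox_eq Basis_prod_def inner_prod_def power2_eq_square)
  also have "\<dots> = 16 * 4 ^ m"
    by (simp add: power2_eq_square power_mult_distrib[symmetric] field_simps)
  finally show ?thesis .
qed

lemma path_loss_le_dyadic_shell:
  fixes c v a :: real and x :: "real \<times> real"
  assumes c: "0 \<le> c" and a: "0 < a" and x: "1 < max_norm x"
  shows "ennreal (c * v * norm x powr (- a))
    \<le> (\<Sum>m. ennreal ((2 powr (- a)) ^ m) * (indicator (dyadic_shell m) x * ennreal (c * v)))"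
proof (cases "0 \<le> v")
  case False
  then have "c * v * norm x powr (- a) \<le> 0" using c by (simp add: mult_nonneg_nonpos2 mult_nonneg_nonpos)
  then have "ennreal (c * v * norm x powr (- a)) = 0" by (simp add: ennreal_eq_0_iff)
  then show ?thesis by simp
next
  case True
  define m where "m = nat \<lfloor>log 2 (max_norm x)\<rfloor>"
  have "\<lfloor>log 2 (max_norm x)\<rfloor> = int m" using x unfolding m_def by simp
  from iffD1[OF floor_log_eq_powr_iff this] x
  have m: "2 powr real m \<le> max_norm x" "max_norm x < 2 powr (real m + 1)" by auto
  then have shell: "x \<in> dyadic_shell m"
    unfolding dyadic_shell_def by (simp add: powr_realpow[symmetric] powr_add)
  have "norm x powr (- a) \<le> max_norm x powr (- a)"
    by (rule powr_mono2') (use a x max_norm_le_norm in auto)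
  also have "\<dots> \<le> (2 powr real m) powr (- a)"
    by (rule powr_mono2') (use a m in auto)
  also have "\<dots> = (2 powr (- a)) ^ m" by (simp add: powr_powr powr_realpow[symmetric] mult.commute)
  finally have "c * v * norm x powr (- a) \<le> (2 powr (- a)) ^ m * (c * v)"
    using True c by (simp add: mult.commute mult_left_mono)
  then have "ennreal (c * v * norm x powr (- a))
      \<le> ennreal ((2 powr (- a)) ^ m) * (indicator (dyadic_shell m) x * ennreal (c * v))"
    using shell True c by (simp add: ennreal_mult'[symmetric] ennreal_leI)
  also have "\<dots> \<le> (\<Sum>m. ennreal ((2 powr (- a)) ^ m) * (indicator (dyadic_shell m) x * ennreal (c * v)))"
    by (rule ennreal_le_suminf)
  finally show ?thesis .
qed

definition far_shot_noise ::
    "(nat \<Rightarrow> 'w \<Rightarrow> real \<times> real) \<Rightarrow> (nat \<Rightarrow> 'w \<Rightarrow> real) \<Rightarrow> real \<Rightarrow> real \<Rightarrow> 'w \<Rightarrow> ennreal" where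
  "far_shot_noise p V c a \<omega> =
     (\<Sum>n. if 1 < max_norm (p n \<omega>) then ennreal (c * V n \<omega> * norm (p n \<omega>) powr (- a)) else 0)"

lemma far_shot_noise_le_dyadic_shells:
  assumes c: "0 \<le> c" and a: "0 < a"
  shows "far_shot_noise p V c a \<omega> \<le> (\<Sum>m. ennreal ((2 powr (- a)) ^ m * c)
    * (\<Sum>n. indicator (dyadic_shell m) (p n \<omega>) * ennreal (V n \<omega>)))"
proof -
  have "far_shot_noise p V c a \<omega> \<le> (\<Sum>n. \<Sum>m. ennreal ((2 powr (- a)) ^ m)
      * (indicator (dyadic_shell m) (p n \<omega>) * ennreal (c * V n \<omega>)))"
    unfolding far_shot_noise_def using a c
    by (intro suminf_le allI) (auto intro!: path_loss_le_dyadic_shell)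
  also have "\<dots> = (\<Sum>m. \<Sum>n. ennreal ((2 powr (- a)) ^ m)
      * (indicator (dyadic_shell m) (p n \<omega>) * ennreal (c * V n \<omega>)))"
    by (rule ennreal_suminf_swap)
  also have "\<dots> = (\<Sum>m. ennreal ((2 powr (- a)) ^ m * c)
      * (\<Sum>n. indicator (dyadic_shell m) (p n \<omega>) * ennreal (V n \<omega>)))"
    using c by (intro suminf_cong)
      (simp add: ennreal_mult' mult_ac flip: ennreal_suminf_cmult del: ennreal_suminf_cmult)
  finally show ?thesis .
qed

lemma (in prob_space) hppp_far_shot_noise_nn_integral_le:
  assumes H: "hppp M mu p"
    and V: "\<And>n. distributed M lborel (V n) (\<lambda>x. ennreal (exponential_density 1 x))"
    and indep: "\<And>n A C. A \<in> sets borel \<Longrightarrow> C \<in> sets borel \<Longrightarrow>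
      prob ({\<omega>\<in>space M. p n \<omega> \<in> A} \<inter> (V n -` C \<inter> space M))
        = prob {\<omega>\<in>space M. p n \<omega> \<in> A} * prob (V n -` C \<inter> space M)"
    and c: "0 \<le> c" and a: "2 < a"
  shows "(\<integral>\<^sup>+\<omega>. far_shot_noise p V c a \<omega> \<partial>M) \<le> ennreal (16 * c * mu / (1 - 2 powr (2 - a)))"
proof -
  have [measurable]: "V n \<in> borel_measurable M" for n
    using distributed_measurable[OF V[of n]] by simp
  have mu: "0 \<le> mu" by (rule hppp_intensity_nonneg[OF H])
  define q where "q = 2 powr (- a)"
  define S where "S m \<omega> = (\<Sum>n. indicator (dyadic_shell m) (p n \<omega>) * ennreal (V n \<omega>))" for m \<omega>
  have [measurable]: "S m \<in> borel_measurable M" for m unfolding S_def using H by measurable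
  have "(\<integral>\<^sup>+\<omega>. far_shot_noise p V c a \<omega> \<partial>M) \<le> (\<integral>\<^sup>+\<omega>. (\<Sum>m. ennreal (q ^ m * c) * S m \<omega>) \<partial>M)"
    unfolding q_def S_def using c a by (intro nn_integral_mono far_shot_noise_le_dyadic_shells) auto
  also have "\<dots> = (\<Sum>m. ennreal (q ^ m * c) * (\<integral>\<^sup>+\<omega>. S m \<omega> \<partial>M))"
    by (simp add: nn_integral_suminf nn_integral_cmult)
  also have "\<dots> = (\<Sum>m. ennreal (q ^ m * c * (mu * measure lborel (dyadic_shell m))))"
  proof -
    have "(\<integral>\<^sup>+\<omega>. S m \<omega> \<partial>M) = ennreal (mu * measure lborel (dyadic_shell m))" for m
      unfolding S_def using H
      by (subst nn_integral_suminf) (auto intro!: hppp_marked_nn_integral[OF H _ _ V indep]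
          simp: bounded_dyadic_shell)
    then show ?thesis using c mu by (simp add: q_def ennreal_mult)
  qed
  also have "\<dots> \<le> (\<Sum>m. ennreal (16 * c * mu * (4 * q) ^ m))"
  proof (intro suminf_le allI ennreal_leI)
    fix m
    have "q ^ m * c * (mu * measure lborel (dyadic_shell m)) \<le> q ^ m * c * (mu * (16 * 4 ^ m))"
      using measure_dyadic_shell_le[of m] mu c by (intro mult_left_mono) (auto simp: q_def)
    then show "q ^ m * c * (mu * measure lborel (dyadic_shell m)) \<le> 16 * c * mu * (4 * q) ^ m"
      by (simp add: power_mult_distrib mult_ac)
  qed auto
  also have "\<dots> = ennreal (16 * c * mu / (1 - 2 powr (2 - a)))"
  proof -
    have q: "4 * q = 2 powr (2 - a)" unfolding q_def by (simp add: powr_diff powr_minus divide_inverse)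
    have r: "0 \<le> 2 powr (2 - a)" "2 powr (2 - a) < (1::real)"
      using a powr_less_cancel_iff[of 2 "2 - a" 0] by auto
    have "(\<lambda>m. 16 * c * mu * (4 * q) ^ m) sums (16 * c * mu * (1 / (1 - 2 powr (2 - a))))"
      unfolding q by (intro sums_mult geometric_sums) (use r in auto)
    then show ?thesis using c r mu by (subst suminf_ennreal_eq) (auto simp: q)
  qed
  finally show ?thesis .
qed

section \<open>The SIR model\<close>

lemma Omg_pos:
  assumes "0 < P j" "1 \<le> Mn j" "0 < Bs j"
  shows "0 < Omg P Mn Bs j"
  using assms unfolding Omg_def by simp

lemma sir_modelD:
  assumes "sir_model K lam lu P Mn Bs al eps k M X G p V"
  shows "prob_space M"
    and "distributed M lborel X (\<lambda>x. ennreal (servDens K lam (Omg P Mn Bs) al eps k x))"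
    and "distributed M lborel G (\<lambda>x. ennreal (erlang_density (Mn k - 1) 1 x))"
    and "j \<in> {1..K} \<Longrightarrow> hppp M (actA K lam lu (Omg P Mn Bs) al eps j * lam j) (p j)"
    and "j \<in> {1..K} \<Longrightarrow> distributed M lborel (V j n) (\<lambda>x. ennreal (exponential_density 1 x))"
    and "prob_space.indep_sets M (comp_sets M X G p V) (comp_idx K)"
  using assms unfolding sir_model_def Let_def by auto

lemma sir_model_point_mark_indep:
  assumes S: "sir_model K lam lu P Mn Bs al eps k M X G p V" and j: "j \<in> {1..K}"
    and A: "A \<in> sets borel" and B: "B \<in> sets borel"
  shows "measure M ({\<omega>\<in>space M. p j n \<omega> \<in> A} \<inter> (V j n -` B \<inter> space M))
    = measure M {\<omega>\<in>space M. p j n \<omega> \<in> A} * measure M (V j n -` B \<inter> space M)"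
proof -
  interpret prob_space M by (rule sir_modelD(1)[OF S])
  define D where "D = {f \<in> space (PiM UNIV (\<lambda>_::nat. borel :: (real \<times> real) measure)). f n \<in> A}"
  have "D \<in> sets (PiM UNIV (\<lambda>_. borel))" unfolding D_def using A by measurable
  moreover have "{\<omega>\<in>space M. p j n \<omega> \<in> A} = (\<lambda>\<omega> n. p j n \<omega>) -` D \<inter> space M"
    unfolding D_def by (auto simp: space_PiM)
  ultimately have "{\<omega>\<in>space M. p j n \<omega> \<in> A} \<in> comp_sets M X G p V (cP j)"
    unfolding comp_sets_def gen_sets_def by auto
  moreover have "V j n -` B \<inter> space M \<in> comp_sets M X G p V (cV j n)"
    using B unfolding comp_sets_def gen_sets_def by auto
  ultimately show ?thesis
    using j by (intro indep_sets_prob_Int[OF sir_modelD(6)[OF S]]) (auto simp: comp_idx_def)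
qed

lemma (in prob_space) serving_distance_in_range:
  assumes "distributed M lborel X (\<lambda>x. ennreal (servDens K lam Om al eps k x))"
  shows "prob {\<omega>\<in>space M. \<not> (0 < X \<omega> \<and> X \<omega> \<le> accR Om al eps k)} = 0"
proof -
  let ?A = "- {0<..accR Om al eps k}"
  have "emeasure M (X -` ?A \<inter> space M)
      = (\<integral>\<^sup>+x. ennreal (servDens K lam Om al eps k x) * indicator ?A x \<partial>lborel)"
    by (rule distributed_emeasure[OF assms]) auto
  also have "\<dots> = 0" by (auto simp: servDens_def indicator_def intro!: nn_integral_zero')
  moreover have "X -` ?A \<inter> space M = {\<omega>\<in>space M. \<not> (0 < X \<omega> \<and> X \<omega> \<le> accR Om al eps k)}"
    by auto
  ultimately show ?thesis by (simp add: emeasure_eq_measure)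
qed

lemma path_gain_ge_access_threshold:
  assumes "0 < Om k" "0 < eps" "0 < al k" "0 < x" "x \<le> accR Om al eps k"
  shows "eps / Om k \<le> x powr (- al k)"
proof -
  have "eps / Om k = (Om k / eps) powr (1 / al k * - al k)"
    using assms by (simp add: powr_neg_one)
  also have "\<dots> = accR Om al eps k powr (- al k)" by (simp add: accR_def powr_powr)
  also have "\<dots> \<le> x powr (- al k)" by (rule powr_mono2') (use assms in auto)
  finally show ?thesis .
qed

lemma gfun_bounds:
  assumes "\<forall>l\<in>{1..K}. 0 < lam l"
  shows "0 \<le> gfun K lam Om al j r" "gfun K lam Om al j r \<le> 1"
proof -
  have "0 \<le> (\<Sum>l\<in>{1..K}. lam l * (Om l / Om j) powr (2 / al l) * r powr ((2 / al l) / (2 / al j)))"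
    using assms by (intro sum_nonneg mult_nonneg_nonneg) (auto simp: less_imp_le)
  then show "0 \<le> gfun K lam Om al j r" "gfun K lam Om al j r \<le> 1" unfolding gfun_def by auto
qed

lemma integral_gfun_bounds:
  assumes "\<forall>l\<in>{1..K}. 0 < lam l" and a: "0 \<le> a"
  shows "0 \<le> integral {0..a} (gfun K lam Om al j)" "integral {0..a} (gfun K lam Om al j) \<le> a"
proof -
  have "0 \<le> integral {0..a} (gfun K lam Om al j) \<and> integral {0..a} (gfun K lam Om al j) \<le> a"
  proof (cases "gfun K lam Om al j integrable_on {0..a}")
    case True
    have "integral {0..a} (gfun K lam Om al j) \<le> integral {0..a} (\<lambda>_. 1::real)"
      by (rule integral_le[OF True]) (use gfun_bounds[OF assms(1)] in auto)
    moreover have "0 \<le> integral {0..a} (gfun K lam Om al j)"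
      by (rule integral_nonneg[OF True]) (use gfun_bounds[OF assms(1)] in auto)
    ultimately show ?thesis using a by simp
  qed (use a in \<open>simp add: not_integrable_integral\<close>)
  then show "0 \<le> integral {0..a} (gfun K lam Om al j)" "integral {0..a} (gfun K lam Om al j) \<le> a"
    by auto
qed

lemma actA_bounds:
  assumes "\<forall>l\<in>{1..K}. 0 < lam l" and lu: "0 < lu"
  shows "0 \<le> actA K lam lu Om al eps j" "actA K lam lu Om al eps j \<le> 1"
    "actA K lam lu Om al eps j \<le> 1 - exp (- (pi * lu * (accR Om al eps j)\<^sup>2))"
proof -
  note I = integral_gfun_bounds[OF assms(1), of "(accR Om al eps j)\<^sup>2" Om al j]
  have "0 \<le> pi * lu * integral {0..(accR Om al eps j)\<^sup>2} (gfun K lam Om al j)"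
    using I lu by auto
  then show "0 \<le> actA K lam lu Om al eps j" "actA K lam lu Om al eps j \<le> 1"
    unfolding actA_def by auto
  have "pi * lu * integral {0..(accR Om al eps j)\<^sup>2} (gfun K lam Om al j) \<le> pi * lu * (accR Om al eps j)\<^sup>2"
    using I lu by (intro mult_left_mono) auto
  then show "actA K lam lu Om al eps j \<le> 1 - exp (- (pi * lu * (accR Om al eps j)\<^sup>2))"
    unfolding actA_def by simp
qed

lemma accR_tendsto_0:
  assumes "0 < Om j" "0 < al j"
  shows "((\<lambda>eps. accR Om al eps j) \<longlongrightarrow> 0) at_top"
proof -
  have "((\<lambda>eps. Om j / eps) \<longlongrightarrow> 0) at_top"
    by (rule tendsto_divide_0[OF tendsto_const filterlim_at_top_imp_at_infinity[OF filterlim_ident]])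
  then show ?thesis
    unfolding accR_def using assms
    by (intro tendsto_zero_powrI[where b = "1 / al j"])
      (auto intro!: eventually_mono[OF eventually_gt_at_top[of 0]])
qed

lemma actA_tendsto_0:
  assumes "\<forall>l\<in>{1..K}. 0 < lam l" "0 < lu" "0 < Om j" "0 < al j"
  shows "((\<lambda>eps. actA K lam lu Om al eps j) \<longlongrightarrow> 0) at_top"
proof (rule tendsto_sandwich)
  show "\<forall>\<^sub>F eps in at_top. 0 \<le> actA K lam lu Om al eps j"
    using actA_bounds(1)[OF assms(1,2)] by simp
  show "\<forall>\<^sub>F eps in at_top. actA K lam lu Om al eps j \<le> 1 - exp (- (pi * lu * (accR Om al eps j)\<^sup>2))"
    using actA_bounds(3)[OF assms(1,2)] by simp
  have "((\<lambda>eps. 1 - exp (- (pi * lu * (accR Om al eps j)\<^sup>2))) \<longlongrightarrow> 1 - exp (- (pi * lu * 0\<^sup>2))) at_top"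
    by (intro tendsto_intros accR_tendsto_0 assms(3,4))
  then show "((\<lambda>eps. 1 - exp (- (pi * lu * (accR Om al eps j)\<^sup>2))) \<longlongrightarrow> 0) at_top" by simp
qed simp

section \<open>Outage\<close>

lemma interf_le_far_shot_noise:
  assumes "\<forall>j\<in>{1..K}. \<forall>n. p j n \<omega> \<notin> cbox (-1, -1) (1, 1)"
  shows "interf K P Om al k p V X \<omega> \<le> (\<Sum>j\<in>{1..K}. far_shot_noise (p j) (V j) (P j) (al j) \<omega>)"
  unfolding interf_def far_shot_noise_def
  using assms by (intro sum_mono suminf_le allI) (auto simp: one_less_max_norm_iff)

lemma outage_cases:
  assumes out: "ennreal (P k * G \<omega> * X \<omega> powr (- al k)) < ennreal \<beta> * interf K P Om al k p V X \<omega>"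
    and pos: "0 < P k" "0 < Om k" "0 < al k" "0 < eps" "0 < \<delta>"
  shows "G \<omega> \<le> \<delta> \<or> \<not> (0 < X \<omega> \<and> X \<omega> \<le> accR Om al eps k)
    \<or> (\<exists>j\<in>{1..K}. \<exists>n. p j n \<omega> \<in> cbox (-1, -1) (1, 1))
    \<or> ennreal (P k * \<delta> * eps / Om k)
        \<le> ennreal \<beta> * (\<Sum>j\<in>{1..K}. far_shot_noise (p j) (V j) (P j) (al j) \<omega>)"
proof (rule ccontr)
  assume "\<not> ?thesis"
  then have G: "\<delta> < G \<omega>" and X: "0 < X \<omega>" "X \<omega> \<le> accR Om al eps k"
    and far: "\<forall>j\<in>{1..K}. \<forall>n. p j n \<omega> \<notin> cbox (-1, -1) (1, 1)"
    and small: "ennreal \<beta> * (\<Sum>j\<in>{1..K}. far_shot_noise (p j) (V j) (P j) (al j) \<omega>)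
      < ennreal (P k * \<delta> * eps / Om k)"
    by auto
  have "\<delta> * (eps / Om k) \<le> G \<omega> * X \<omega> powr (- al k)"
    using G pos path_gain_ge_access_threshold[OF pos(2,4,3) X] by (intro mult_mono) auto
  then have "P k * (\<delta> * (eps / Om k)) \<le> P k * (G \<omega> * X \<omega> powr (- al k))"
    using pos by (intro mult_left_mono) auto
  then have "ennreal (P k * \<delta> * eps / Om k) < ennreal \<beta> * interf K P Om al k p V X \<omega>"
    using out ennreal_leI le_less_trans by (fastforce simp: mult.assoc)
  also have "\<dots> \<le> ennreal \<beta> * (\<Sum>j\<in>{1..K}. far_shot_noise (p j) (V j) (P j) (al j) \<omega>)"
    by (intro mult_left_mono interf_le_far_shot_noise far) simp
  finally show False using small by simp
qed

lemma sir_model_measurable: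
  assumes S: "sir_model K lam lu P Mn Bs al eps k M X G p V"
  shows "X \<in> borel_measurable M" "G \<in> borel_measurable M"
    and "j \<in> {1..K} \<Longrightarrow> p j n \<in> borel_measurable M"
    and "j \<in> {1..K} \<Longrightarrow> V j n \<in> borel_measurable M"
    and "j \<in> {1..K} \<Longrightarrow> far_shot_noise (p j) (V j) c a \<in> borel_measurable M"
proof -
  show "X \<in> borel_measurable M" "G \<in> borel_measurable M"
    using distributed_measurable[OF sir_modelD(2)[OF S]] distributed_measurable[OF sir_modelD(3)[OF S]]
    by simp_all
  assume j: "j \<in> {1..K}"
  have [measurable]: "p j n \<in> borel_measurable M" "V j n \<in> borel_measurable M" for n
    using sir_modelD(4)[OF S j] distributed_measurable[OF sir_modelD(5)[OF S j]]
    by (simp_all add: hppp_measurable)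
  then show "p j n \<in> borel_measurable M" "V j n \<in> borel_measurable M" by simp_all
  show "far_shot_noise (p j) (V j) c a \<in> borel_measurable M"
    unfolding far_shot_noise_def by measurable
qed

lemma sir_model_prob_near_le:
  assumes S: "sir_model K lam lu P Mn Bs al eps k M X G p V"
  shows "measure M (\<Union>j\<in>{1..K}. {\<omega>\<in>space M. \<exists>n. p j n \<omega> \<in> cbox (-1, -1) (1, 1)})
    \<le> (\<Sum>j\<in>{1..K}. 4 * (actA K lam lu (Omg P Mn Bs) al eps j * lam j))"
proof -
  interpret prob_space M by (rule sir_modelD(1)[OF S])
  have [measurable]: "p j n \<in> borel_measurable M" if "j \<in> {1..K}" for j n
    using sir_model_measurable(3)[OF S that] .
  have "measure M (\<Union>j\<in>{1..K}. {\<omega>\<in>space M. \<exists>n. p j n \<omega> \<in> cbox (-1, -1) (1, 1)})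
      \<le> (\<Sum>j\<in>{1..K}. prob {\<omega>\<in>space M. \<exists>n. p j n \<omega> \<in> cbox (-1, -1) (1, 1)})"
    by (rule finite_measure_subadditive_finite) auto
  also have "\<dots> \<le> (\<Sum>j\<in>{1..K}. 4 * (actA K lam lu (Omg P Mn Bs) al eps j * lam j))"
  proof (intro sum_mono)
    fix j assume "j \<in> {1..K}"
    then have "prob {\<omega>\<in>space M. \<exists>n. p j n \<omega> \<in> cbox (-1, -1) (1, 1)}
        \<le> actA K lam lu (Omg P Mn Bs) al eps j * lam j * measure lborel (cbox (-1, -1) (1, 1) :: (real \<times> real) set)"
      by (intro hppp_prob_hits_le sir_modelD(4)[OF S]) auto
    then show "prob {\<omega>\<in>space M. \<exists>n. p j n \<omega> \<in> cbox (-1, -1) (1, 1)}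
        \<le> 4 * (actA K lam lu (Omg P Mn Bs) al eps j * lam j)"
      by (simp only: unit_square_measure mult.commute)
  qed
  finally show ?thesis .
qed

lemma sir_model_prob_far_le:
  assumes pos: "\<forall>j\<in>{1..K}. 0 < lam j \<and> 0 < P j \<and> 2 < al j"
    and lu: "0 < lu" and \<beta>: "0 < \<beta>" and t: "0 < t"
    and S: "sir_model K lam lu P Mn Bs al eps k M X G p V"
  shows "measure M {\<omega>\<in>space M.
      ennreal t \<le> ennreal \<beta> * (\<Sum>j\<in>{1..K}. far_shot_noise (p j) (V j) (P j) (al j) \<omega>)}
    \<le> \<beta> * (\<Sum>j\<in>{1..K}. 16 * P j * lam j / (1 - 2 powr (2 - al j))) / t"
proof -
  interpret prob_space M by (rule sir_modelD(1)[OF S])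
  note far_meas = sir_model_measurable(5)[OF S]
  define C where "C j = 16 * P j * lam j / (1 - 2 powr (2 - al j))" for j
  have par: "0 < lam j" "0 < P j" "2 < al j" if "j \<in> {1..K}" for j
    using pos that by auto
  have r: "0 \<le> 2 powr (2 - al j)" "2 powr (2 - al j) < 1" if "j \<in> {1..K}" for j
    using par(3)[OF that] powr_less_cancel_iff[of 2 "2 - al j" 0] by auto
  have C: "0 \<le> C j" if "j \<in> {1..K}" for j
    using par[OF that] r[OF that] unfolding C_def by (intro divide_nonneg_pos) auto
  then have sumC: "0 \<le> sum C {1..K}" by (rule sum_nonneg)
  have "(\<integral>\<^sup>+\<omega>. (\<Sum>j\<in>{1..K}. far_shot_noise (p j) (V j) (P j) (al j) \<omega>) \<partial>M)
      = (\<Sum>j\<in>{1..K}. \<integral>\<^sup>+\<omega>. far_shot_noise (p j) (V j) (P j) (al j) \<omega> \<partial>M)"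
    by (rule nn_integral_sum) (rule far_meas)
  also have "\<dots> \<le> (\<Sum>j\<in>{1..K}. ennreal (C j))"
  proof (intro sum_mono)
    fix j assume j: "j \<in> {1..K}"
    define mu where "mu = actA K lam lu (Omg P Mn Bs) al eps j * lam j"
    have "mu \<le> lam j"
      using actA_bounds(2)[of K lam lu "Omg P Mn Bs" al eps j] pos lu par(1)[OF j]
      by (simp add: mu_def)
    then have "16 * P j * mu / (1 - 2 powr (2 - al j)) \<le> C j"
      using par[OF j] r[OF j] unfolding C_def by (intro divide_right_mono mult_left_mono) auto
    moreover have "(\<integral>\<^sup>+\<omega>. far_shot_noise (p j) (V j) (P j) (al j) \<omega> \<partial>M)
        \<le> ennreal (16 * P j * mu / (1 - 2 powr (2 - al j)))"
      using par[OF j] sir_modelD(4)[OF S j] unfolding mu_def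
      by (intro hppp_far_shot_noise_nn_integral_le sir_modelD(5)[OF S j] sir_model_point_mark_indep[OF S j])
        auto
    ultimately show "(\<integral>\<^sup>+\<omega>. far_shot_noise (p j) (V j) (P j) (al j) \<omega> \<partial>M) \<le> ennreal (C j)"
      by (meson order.trans ennreal_leI)
  qed
  also have "\<dots> = ennreal (sum C {1..K})" by (rule sum_ennreal) (rule C)
  finally have "(\<integral>\<^sup>+\<omega>. ennreal \<beta> * (\<Sum>j\<in>{1..K}. far_shot_noise (p j) (V j) (P j) (al j) \<omega>) \<partial>M)
      \<le> ennreal (\<beta> * sum C {1..K})"
    using far_meas \<beta> sumC by (subst nn_integral_cmult) (auto simp: ennreal_mult intro: mult_left_mono)
  then show ?thesis
    unfolding C_def[symmetric] using far_meas \<beta> t sumC by (intro prob_ge_le_nn_integral) auto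
qed

lemma outage_prob_le:
  fixes K k :: nat and lam P Bs al :: "nat \<Rightarrow> real" and Mn :: "nat \<Rightarrow> nat"
    and lu \<beta> eps \<delta> :: real and M :: "'w measure" and X G :: "'w \<Rightarrow> real"
    and p :: "nat \<Rightarrow> nat \<Rightarrow> 'w \<Rightarrow> real \<times> real" and V :: "nat \<Rightarrow> nat \<Rightarrow> 'w \<Rightarrow> real"
  assumes k: "k \<in> {1..K}"
    and pos: "\<forall>j\<in>{1..K}. 0 < lam j \<and> 0 < P j \<and> 1 \<le> Mn j \<and> 0 < Bs j \<and> 2 < al j"
    and lu: "0 < lu" and \<beta>: "0 < \<beta>" and eps: "0 < eps" and \<delta>: "0 < \<delta>"
    and S: "sir_model K lam lu P Mn Bs al eps k M X G p V"
  defines "Om \<equiv> Omg P Mn Bs"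
  shows "measure M {\<omega> \<in> space M. ennreal (P k * G \<omega> * X \<omega> powr (- al k))
                 < ennreal \<beta> * interf K P Om al k p V X \<omega>}
     \<le> \<delta> + (\<Sum>j\<in>{1..K}. 4 * (actA K lam lu Om al eps j * lam j))
        + \<beta> * (\<Sum>j\<in>{1..K}. 16 * P j * lam j / (1 - 2 powr (2 - al j))) * Om k / P k / (\<delta> * eps)"
proof -
  interpret prob_space M by (rule sir_modelD(1)[OF S])
  note [measurable] = sir_model_measurable[OF S]
  have par: "0 < P k" "0 < Om k" "0 < al k"
    using pos k by (force simp: Om_def intro!: Omg_pos)+
  define t where "t = P k * \<delta> * eps / Om k"
  define Egain where "Egain = {\<omega>\<in>space M. G \<omega> \<le> \<delta>}"
  define Edist where "Edist = {\<omega>\<in>space M. \<not> (0 < X \<omega> \<and> X \<omega> \<le> accR Om al eps k)}"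
  define Enear where "Enear = (\<Union>j\<in>{1..K}. {\<omega>\<in>space M. \<exists>n. p j n \<omega> \<in> cbox (-1, -1) (1, 1)})"
  define Efar where "Efar = {\<omega>\<in>space M.
    ennreal t \<le> ennreal \<beta> * (\<Sum>j\<in>{1..K}. far_shot_noise (p j) (V j) (P j) (al j) \<omega>)}"
  have [measurable]: "Egain \<in> events" "Edist \<in> events" "Enear \<in> events" "Efar \<in> events"
    unfolding Egain_def Edist_def Enear_def Efar_def by measurable
  have "{\<omega> \<in> space M. ennreal (P k * G \<omega> * X \<omega> powr (- al k)) < ennreal \<beta> * interf K P Om al k p V X \<omega>}
      \<subseteq> Egain \<union> Edist \<union> Enear \<union> Efar"
  proof
    fix \<omega> assume "\<omega> \<in> {\<omega> \<in> space M. ennreal (P k * G \<omega> * X \<omega> powr (- al k))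
      < ennreal \<beta> * interf K P Om al k p V X \<omega>}"
    then have \<omega>: "\<omega> \<in> space M"
      and out: "ennreal (P k * G \<omega> * X \<omega> powr (- al k)) < ennreal \<beta> * interf K P Om al k p V X \<omega>"
      by auto
    from \<omega> outage_cases[of P k G \<omega> X, OF out par eps \<delta>] show "\<omega> \<in> Egain \<union> Edist \<union> Enear \<union> Efar"
      unfolding Egain_def Edist_def Enear_def Efar_def t_def by blast
  qed
  then have "measure M {\<omega> \<in> space M. ennreal (P k * G \<omega> * X \<omega> powr (- al k))
        < ennreal \<beta> * interf K P Om al k p V X \<omega>} \<le> measure M (Egain \<union> Edist \<union> Enear \<union> Efar)"
    by (rule finite_measure_mono) simp
  also have "\<dots> \<le> measure M Egain + measure M Edist + measure M Enear + measure M Efar"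
    using measure_Un_le[of "Egain \<union> Edist \<union> Enear" M Efar] measure_Un_le[of "Egain \<union> Edist" M Enear]
      measure_Un_le[of Egain M Edist]
    by simp
  also have "\<dots> \<le> \<delta> + 0 + (\<Sum>j\<in>{1..K}. 4 * (actA K lam lu Om al eps j * lam j))
      + \<beta> * (\<Sum>j\<in>{1..K}. 16 * P j * lam j / (1 - 2 powr (2 - al j))) / t"
  proof (intro add_mono)
    show "measure M Egain \<le> \<delta>"
      unfolding Egain_def using \<delta> by (intro erlang_1_prob_le[OF sir_modelD(3)[OF S]]) simp
    show "measure M Edist \<le> 0"
      unfolding Edist_def Om_def using serving_distance_in_range[OF sir_modelD(2)[OF S]] by simp
    show "measure M Enear \<le> (\<Sum>j\<in>{1..K}. 4 * (actA K lam lu Om al eps j * lam j))"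
      unfolding Enear_def Om_def by (rule sir_model_prob_near_le[OF S])
    show "measure M Efar \<le> \<beta> * (\<Sum>j\<in>{1..K}. 16 * P j * lam j / (1 - 2 powr (2 - al j))) / t"
      unfolding Efar_def using pos par \<delta> eps
      by (intro sir_model_prob_far_le[OF _ lu \<beta> _ S]) (auto simp: t_def)
  qed
  also have "\<beta> * (\<Sum>j\<in>{1..K}. 16 * P j * lam j / (1 - 2 powr (2 - al j))) / t
      = \<beta> * (\<Sum>j\<in>{1..K}. 16 * P j * lam j / (1 - 2 powr (2 - al j))) * Om k / P k / (\<delta> * eps)"
    using par \<delta> eps by (simp add: t_def field_simps)
  finally show ?thesis by simp
qed

theorem mainTheorem7:
  fixes K k :: nat and lam P Bs al :: "nat \<Rightarrow> real" and Mn :: "nat \<Rightarrow> nat"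
    and lu \<beta> :: real
    and M :: "real \<Rightarrow> 'w measure" and X G :: "real \<Rightarrow> 'w \<Rightarrow> real"
    and p :: "real \<Rightarrow> nat \<Rightarrow> nat \<Rightarrow> 'w \<Rightarrow> real \<times> real"
    and V :: "real \<Rightarrow> nat \<Rightarrow> nat \<Rightarrow> 'w \<Rightarrow> real"
  assumes "1 \<le> K" and "k \<in> {1..K}"
    and "\<forall>j\<in>{1..K}. 0 < lam j \<and> 0 < P j \<and> 1 \<le> Mn j \<and> 0 < Bs j \<and> 2 < al j"
    and "0 < lu" and "0 < \<beta>"
    and "\<forall>eps>0. sir_model K lam lu P Mn Bs al eps k (M eps) (X eps) (G eps) (p eps) (V eps)"
  shows "((\<lambda>eps. measure (M eps)
            {\<omega> \<in> space (M eps).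
               ennreal (P k * G eps \<omega> * X eps \<omega> powr (- al k))
                 < ennreal \<beta> * interf K P (Omg P Mn Bs) al k (p eps) (V eps) (X eps) \<omega>})
          \<longlongrightarrow> 0) at_top"
proof (rule tendsto_sandwich[OF _ _ tendsto_const])
  let ?A = "\<lambda>eps j. actA K lam lu (Omg P Mn Bs) al eps j"
  define D where "D = \<beta> * (\<Sum>j\<in>{1..K}. 16 * P j * lam j / (1 - 2 powr (2 - al j))) * Omg P Mn Bs k / P k"
  let ?bound = "\<lambda>eps. 1 / sqrt eps + (\<Sum>j\<in>{1..K}. 4 * (?A eps j * lam j)) + D / (1 / sqrt eps * eps)"
  show "\<forall>\<^sub>F eps in at_top. measure (M eps) {\<omega> \<in> space (M eps).
      ennreal (P k * G eps \<omega> * X eps \<omega> powr (- al k))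
        < ennreal \<beta> * interf K P (Omg P Mn Bs) al k (p eps) (V eps) (X eps) \<omega>} \<le> ?bound eps"
    using eventually_gt_at_top[of 0] unfolding D_def
    by eventually_elim (rule outage_prob_le; use assms in auto)
  have "((\<lambda>eps. \<Sum>j\<in>{1..K}. 4 * (?A eps j * lam j)) \<longlongrightarrow> (\<Sum>j\<in>{1..K}. 4 * (0 * lam j))) at_top"
    using assms(3,4) by (intro tendsto_intros actA_tendsto_0) (force intro!: Omg_pos)+
  moreover have "((\<lambda>eps::real. 1 / sqrt eps) \<longlongrightarrow> 0) at_top" by real_asymp
  moreover have "((\<lambda>eps. D / (1 / sqrt eps * eps)) \<longlongrightarrow> 0) at_top"
    by (intro tendsto_divide_0[OF tendsto_const] filterlim_at_top_imp_at_infinity) real_asymp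
  ultimately have "(?bound \<longlongrightarrow> 0 + 0 + 0) at_top"
    by (intro tendsto_add) simp_all
  then show "(?bound \<longlongrightarrow> 0) at_top" by simp
qed simp

end
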